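(* Let $A$ be a finite set, $\Omega=A^{\mathbb{Z}}$ with Borel $\sigma$-algebra, $T$ the left shift, $\mu\in\Delta(\Omega)$ stationary, and $\mathcal{D}$ a shift-invariant $\sigma$-algebra of Borel subsets of $\Omega$. Then, $\mu$-almost surely, $$\bigl\|\mu(\zeta_n=\cdot\mid\mathcal{F}_0^n\vee\mathcal{D})-\mu(\zeta_n=\cdot\mid\mathcal{F}_{-\infty}^n\vee\mathcal{D})\bigr\|\xrightarrow[n\to\infty]{}0$$ in the strong Cesaro sense, i.e. $\frac1N\sum_{n=0}^{N-1}\|\mu(\zeta_n=\cdot\mid\mathcal{F}_0^n\vee\mathcal{D})-\mu(\zeta_n=\cdot\mid\mathcal{F}_{-\infty}^n\vee\mathcal{D})\|\to0$ $\mu$-a.s.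
   Context: $\zeta_n:\Omega\to A$ is the $n$-th coordinate and $T(\omega)_n=\omega_{n+1}$. For $-\infty\le m<k\le\infty$, $\mathcal{F}_m^k$ is the $\sigma$-algebra generated by $\zeta_j$, $m\le j<k$. $\mu(\zeta_n=\cdot\mid\mathcal{G})$ denotes (a version of) the conditional distribution of $\zeta_n$ given $\mathcal{G}$, a $\Delta(A)$-valued random variable; $\vee$ is the join of $\sigma$-algebras. $\mathcal{D}$ shift-invariant means $S\in\mathcal{D}\iff T(S)\in\mathcal{D}$ for every Borel $S$. For $p,q\in\Delta(A)$, $\|p-q\|=\max_a|p[a]-q[a]|$. *)

theory Defs
  imports "HOL-Probability.Probability"
begin

text \<open>The sequence space Omega = A^Z with its Borel (= product) sigma-algebra.\<close>
definition seq_space :: "(int \<Rightarrow> 'a) measure" where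
  "seq_space = PiM UNIV (\<lambda>_. count_space UNIV)"

definition shift :: "(int \<Rightarrow> 'a) \<Rightarrow> (int \<Rightarrow> 'a)" where
  "shift \<omega> = (\<lambda>n. \<omega> (n + 1))"

definition coord_sets :: "int set \<Rightarrow> (int \<Rightarrow> 'a) set set" where
  "coord_sets J = sigma_sets UNIV {(\<lambda>\<omega>. \<omega> j) -` B | j B. j \<in> J}"

definition join_alg :: "int set \<Rightarrow> (int \<Rightarrow> 'a) set set \<Rightarrow> (int \<Rightarrow> 'a) measure" where
  "join_alg J D = sigma UNIV (coord_sets J \<union> D)"

definition cond_dist :: "(int \<Rightarrow> 'a) measure \<Rightarrow> (int \<Rightarrow> 'a) measure \<Rightarrow> int \<Rightarrow> (int \<Rightarrow> 'a) \<Rightarrow> 'a \<Rightarrow> real" where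
  "cond_dist \<mu> G n \<omega> a = real_cond_exp \<mu> G (indicator {\<omega>'. \<omega>' n = a}) \<omega>"

definition dist_max :: "('a::finite \<Rightarrow> real) \<Rightarrow> ('a \<Rightarrow> real) \<Rightarrow> real" where
  "dist_max p q = Max (range (\<lambda>a. \<bar>p a - q a\<bar>))"

end

(*
  Write r_k for the conditional distribution of the coordinate 0 given the coordinates in [-k, 0)
  and D, and r_inf for the one given all negative coordinates and D. Stationarity and the shift
  invariance of D turn the n-th summand into |r_n - r_inf| evaluated at T^n omega. Doob's maximal
  inequality and L1 convergence of the martingales r_k show that, for large k, all |r_n - r_inf|
  with n >= k are dominated by one bounded function Z of small integral. By the maximal ergodic
  inequality the Cesaro averages of Z along orbits are small off a set of small measure, and the
  finitely many terms with n < k do not matter in the limit.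
*)

theory Submission
  imports Defs
begin

section \<open>The maximal ergodic inequality\<close>

definition max_partial_sum :: "nat \<Rightarrow> (nat \<Rightarrow> real) \<Rightarrow> real" where
  "max_partial_sum N a = Max ((\<lambda>n. \<Sum>k<n. a k) ` {..N})"

lemma partial_sum_le_max_partial_sum: "n \<le> N \<Longrightarrow> (\<Sum>k<n. a k) \<le> max_partial_sum N a"
  unfolding max_partial_sum_def by (intro Max_ge) auto

lemma max_partial_sum_nonneg: "0 \<le> max_partial_sum N a"
  using partial_sum_le_max_partial_sum[of 0 N a] by simp

lemma max_partial_sum_attained: "\<exists>n\<le>N. max_partial_sum N a = (\<Sum>k<n. a k)"
proof -
  have "max_partial_sum N a \<in> (\<lambda>n. \<Sum>k<n. a k) ` {..N}"
    unfolding max_partial_sum_def by (intro Max_in) auto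
  then show ?thesis by auto
qed

(* Garsia's pointwise inequality behind the maximal ergodic lemma. *)
lemma max_partial_sum_shift_le:
  "max_partial_sum N a - max_partial_sum N (\<lambda>k. a (Suc k))
     \<le> (if \<exists>n\<in>{1..N}. 0 < (\<Sum>k<n. a k) then a 0 else 0)"
proof (cases "\<exists>n\<in>{1..N}. 0 < (\<Sum>k<n. a k)")
  case True
  then obtain m where m: "m \<le> N" "0 < (\<Sum>k<m. a k)" by auto
  obtain n where n: "n \<le> N" "max_partial_sum N a = (\<Sum>k<n. a k)"
    using max_partial_sum_attained by blast
  have "n \<noteq> 0"
  proof
    assume "n = 0"
    then show False using n partial_sum_le_max_partial_sum[OF m(1), of a] m(2) by simp
  qed
  then obtain n' where n': "n = Suc n'" by (cases n) auto
  have "(\<Sum>k<n. a k) = a 0 + (\<Sum>k<n'. a (Suc k))"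
    unfolding n' by (rule sum.lessThan_Suc_shift)
  moreover have "(\<Sum>k<n'. a (Suc k)) \<le> max_partial_sum N (\<lambda>k. a (Suc k))"
    using n n' by (intro partial_sum_le_max_partial_sum) auto
  ultimately show ?thesis using True n by simp
next
  case False
  obtain n where n: "n \<le> N" "max_partial_sum N a = (\<Sum>k<n. a k)"
    using max_partial_sum_attained by blast
  have "max_partial_sum N a \<le> 0"
    using False n by (cases "n = 0") (auto simp: not_less)
  then show ?thesis using False max_partial_sum_nonneg[of N "\<lambda>k. a (Suc k)"] by simp
qed

lemma sum_le_prefix_bound:
  fixes u Z :: "nat \<Rightarrow> real"
  assumes "\<And>n. u n \<le> C" "\<And>n. k \<le> n \<Longrightarrow> u n \<le> Z n" "\<And>n. 0 \<le> Z n" "0 \<le> C"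
  shows "(\<Sum>n<N. u n) \<le> real k * C + (\<Sum>n<N. Z n)"
proof -
  have "(\<Sum>n<N. u n) \<le> real (min N k) * C + (\<Sum>n<N. Z n)"
  proof (induction N)
    case (Suc N)
    show ?case
    proof (cases "N < k")
      case True
      then have "min (Suc N) k = Suc (min N k)" by simp
      then show ?thesis using Suc assms(1)[of N] assms(3)[of N] by (simp add: algebra_simps)
    next
      case False
      then have "min (Suc N) k = min N k" by simp
      then show ?thesis using Suc assms(2)[of N] False by simp
    qed
  qed simp
  also have "real (min N k) * C \<le> real k * C" using assms(4) by (intro mult_right_mono) auto
  finally show ?thesis by simp
qed

lemma cesaro_eventually_le:
  fixes u Z :: "nat \<Rightarrow> real"
  assumes u: "\<And>n. 0 \<le> u n \<and> u n \<le> C" and u_le_Z: "\<And>n. k \<le> n \<Longrightarrow> u n \<le> Z n"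
    and Z: "\<And>n. 0 \<le> Z n" and Z_sums: "\<And>N. (\<Sum>n<N. Z n) \<le> real N * t" and "0 < t"
  shows "eventually (\<lambda>N. (\<Sum>n<N. u n) / real N \<le> 2 * t) sequentially"
proof -
  have "0 \<le> C" using u[of 0] by linarith
  have "(\<Sum>n<N. u n) / real N \<le> 2 * t" if "nat \<lceil>real k * C / t\<rceil> \<le> N" "1 \<le> N" for N
  proof -
    have "real k * C / t \<le> real N"
      using real_nat_ceiling_ge[of "real k * C / t"] that(1) of_nat_mono by fastforce
    then have "real k * C \<le> real N * t" using \<open>0 < t\<close> by (simp add: field_simps)
    moreover have "(\<Sum>n<N. u n) \<le> real k * C + (\<Sum>n<N. Z n)"
      using u u_le_Z Z \<open>0 \<le> C\<close> by (intro sum_le_prefix_bound) auto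
    ultimately have "(\<Sum>n<N. u n) \<le> real N * (2 * t)" using Z_sums[of N] by (simp add: algebra_simps)
    then show ?thesis using that(2) by (simp add: divide_le_eq mult.commute)
  qed
  then show ?thesis
    using eventually_ge_at_top[of "max 1 (nat \<lceil>real k * C / t\<rceil>)"] by (auto elim!: eventually_mono)
qed

lemma tendsto_zero_if_eventually_le_inverse:
  fixes X :: "nat \<Rightarrow> real"
  assumes "\<And>N. 0 \<le> X N" and "\<And>m. eventually (\<lambda>N. X N \<le> 1 / (real m + 1)) sequentially"
  shows "X \<longlonglongrightarrow> 0"
proof (rule order_tendstoI)
  fix a :: real assume "a < 0"
  then show "eventually (\<lambda>N. a < X N) sequentially"
    using assms(1) less_le_trans by (intro always_eventually) blast
next
  fix a :: real assume "0 < a"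
  then obtain m where "0 < m" "inverse (real m) < a"
    using ex_inverse_of_nat_less by blast
  then have "1 / (real (m - 1) + 1) < a" by (simp add: inverse_eq_divide)
  then show "eventually (\<lambda>N. X N < a) sequentially"
    using assms(2)[of "m - 1"] by (auto elim: eventually_mono)
qed

(* P need not be measurable; its exceptional set is only controlled through the sets E. *)
lemma (in prob_space) AE_small_exceptional_sets:
  assumes "\<And>d. 0 < d \<Longrightarrow> \<exists>E\<in>sets M. measure M E \<le> d \<and> (AE x in M. P x \<or> x \<in> E)"
  shows "AE x in M. P x"
proof -
  have "\<forall>i. \<exists>E\<in>sets M. measure M E \<le> 1 / (real i + 1) \<and> (AE x in M. P x \<or> x \<in> E)"
    using assms by simp
  then obtain E where E: "\<And>i. E i \<in> sets M" "\<And>i. measure M (E i) \<le> 1 / (real i + 1)"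
    "\<And>i. AE x in M. P x \<or> x \<in> E i"
    by metis
  have "measure M (\<Inter>i. E i) \<le> 1 / (real i + 1)" for i
    using finite_measure_mono[of "\<Inter>i. E i" "E i"] E(1,2)[of i] by (auto intro: order_trans)
  then have "measure M (\<Inter>i. E i) \<le> 0"
    by (intro LIMSEQ_le_const[OF LIMSEQ_inverse_real_of_nat]) (auto simp: inverse_eq_divide add.commute)
  then have "(\<Inter>i. E i) \<in> null_sets M"
    using E(1) by (simp add: null_sets_def emeasure_eq_measure antisym countable_Un_Int)
  then have "AE x in M. x \<notin> (\<Inter>i. E i)" by (rule AE_not_in)
  moreover have "AE x in M. \<forall>i. P x \<or> x \<in> E i" unfolding AE_all_countable using E(3) by blast
  ultimately show ?thesis by eventually_elim auto
qed

locale mpt = prob_space M for M :: "'a measure" +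
  fixes T :: "'a \<Rightarrow> 'a"
  assumes measurable_T [measurable]: "T \<in> measurable M M"
    and distr_T: "distr M M T = M"
begin

lemma measurable_funpow [measurable]: "T ^^ n \<in> measurable M M"
  by (induction n) (auto intro: measurable_comp[OF _ measurable_T] simp: measurable_ident)

lemma distr_funpow: "distr M M (T ^^ n) = M"
proof (induction n)
  case 0
  then show ?case by (simp add: distr_id2 cong: distr_cong)
next
  case (Suc n)
  have "distr M M (T ^^ Suc n) = distr (distr M M (T ^^ n)) M T"
    by (subst distr_distr) (auto simp: comp_def)
  then show ?case using Suc distr_T by (simp add: comp_def)
qed

lemma integral_funpow:
  fixes g :: "'a \<Rightarrow> real"
  assumes [measurable]: "g \<in> borel_measurable M"
  shows "(\<integral>x. g ((T ^^ n) x) \<partial>M) = (\<integral>x. g x \<partial>M)"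
  using integral_distr[OF measurable_funpow, of g n] by (simp add: distr_funpow)

lemma integrable_funpow_iff:
  fixes g :: "'a \<Rightarrow> real"
  assumes [measurable]: "g \<in> borel_measurable M"
  shows "integrable M (\<lambda>x. g ((T ^^ n) x)) \<longleftrightarrow> integrable M g"
  using integrable_distr_eq[OF measurable_funpow, of g n] by (simp add: distr_funpow)

lemma AE_funpow:
  assumes "AE x in M. P x"
  shows "AE x in M. P ((T ^^ n) x)"
proof -
  obtain N where N: "{x\<in>space M. \<not> P x} \<subseteq> N" "N \<in> null_sets M"
    using assms by (auto elim!: AE_E)
  have "(T ^^ n) -` N \<inter> space M \<in> null_sets M"
    using N(2) null_sets_distr_iff[OF measurable_funpow, of N n] by (simp add: distr_funpow)
  moreover have "{x\<in>space M. \<not> P ((T ^^ n) x)} \<subseteq> (T ^^ n) -` N \<inter> space M"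
    using N(1) measurable_space[OF measurable_funpow] by auto
  ultimately show ?thesis by (auto intro!: AE_I[where N="(T ^^ n) -` N \<inter> space M"])
qed

lemma maximal_ergodic_lemma:
  fixes f :: "'a \<Rightarrow> real"
  assumes [measurable]: "f \<in> borel_measurable M" and bounded: "\<And>x. \<bar>f x\<bar> \<le> B"
  shows "0 \<le> (\<integral>x. indicator {x\<in>space M. \<exists>n\<in>{1..N}. 0 < (\<Sum>k<n. f ((T ^^ k) x))} x * f x \<partial>M)"
proof -
  define S where "S x = max_partial_sum N (\<lambda>k. f ((T ^^ k) x))" for x
  define E where "E = {x\<in>space M. \<exists>n\<in>{1..N}. 0 < (\<Sum>k<n. f ((T ^^ k) x))}"
  have [measurable]: "S \<in> borel_measurable M" "E \<in> sets M"
    unfolding S_def max_partial_sum_def E_def by measurable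
  have "\<bar>S x\<bar> \<le> real N * B" for x
  proof -
    obtain n where n: "n \<le> N" "S x = (\<Sum>k<n. f ((T ^^ k) x))"
      unfolding S_def using max_partial_sum_attained by blast
    have "\<bar>S x\<bar> \<le> (\<Sum>k<n. \<bar>f ((T ^^ k) x)\<bar>)" unfolding n(2) by (rule sum_abs)
    also have "\<dots> \<le> real n * B" using sum_mono[of "{..<n}", OF bounded] by simp
    also have "\<dots> \<le> real N * B" using n(1) bounded[of x] by (intro mult_right_mono) auto
    finally show ?thesis .
  qed
  then have int_S: "integrable M S" by (intro integrable_const_bound[where B="real N * B"]) auto
  have int_ST: "integrable M (\<lambda>x. S (T x))" using integrable_funpow_iff[of S 1] int_S by simp
  have int_Ef: "integrable M (\<lambda>x. indicator E x * f x)"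
    using bounded order_trans[OF abs_ge_zero bounded]
    by (intro integrable_const_bound[where B=B]) (auto simp: indicator_def)
  have "S x - S (T x) \<le> indicator E x * f x" if "x \<in> space M" for x
    using max_partial_sum_shift_le[of N "\<lambda>k. f ((T ^^ k) x)"] that
    by (auto simp: S_def E_def funpow_swap1 indicator_def split: if_splits)
  then have "(\<integral>x. S x - S (T x) \<partial>M) \<le> (\<integral>x. indicator E x * f x \<partial>M)"
    using int_S int_ST int_Ef by (intro integral_mono) auto
  moreover have "(\<integral>x. S x - S (T x) \<partial>M) = 0"
    using integral_funpow[of S 1] int_S int_ST by simp
  ultimately show ?thesis unfolding E_def by simp
qed

lemma maximal_inequality:
  fixes Z :: "'a \<Rightarrow> real"
  assumes [measurable]: "Z \<in> borel_measurable M" and bounded: "\<And>x. 0 \<le> Z x \<and> Z x \<le> B"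
    and "0 < t"
  shows "t * measure M {x\<in>space M. \<exists>n\<ge>1. real n * t < (\<Sum>k<n. Z ((T ^^ k) x))} \<le> (\<integral>x. Z x \<partial>M)"
proof -
  define E where "E N = {x\<in>space M. \<exists>n\<in>{1..N}. real n * t < (\<Sum>k<n. Z ((T ^^ k) x))}" for N
  have [measurable]: "E N \<in> sets M" for N unfolding E_def by measurable
  have int_Z: "integrable M Z" using bounded by (intro integrable_const_bound[where B=B]) auto
  have "t * measure M (E N) \<le> (\<integral>x. Z x \<partial>M)" for N
  proof -
    have int_EZ: "integrable M (\<lambda>x. indicator (E N) x * Z x)"
      using integrable_real_mult_indicator[OF _ int_Z, of "E N"] by (simp add: mult.commute)
    have partial_sums: "0 < (\<Sum>k<n. Z ((T ^^ k) x) - t) \<longleftrightarrow> real n * t < (\<Sum>k<n. Z ((T ^^ k) x))" for n x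
      by (simp add: sum_subtractf)
    have "0 \<le> (\<integral>x. indicator (E N) x * (Z x - t) \<partial>M)"
      unfolding E_def partial_sums[symmetric]
    proof (rule maximal_ergodic_lemma)
      show "\<bar>Z x - t\<bar> \<le> B + t" for x using bounded[of x] \<open>0 < t\<close> by auto
    qed measurable
    also have "\<dots> = (\<integral>x. indicator (E N) x * Z x - t * indicator (E N) x \<partial>M)"
      by (simp add: algebra_simps)
    also have "\<dots> = (\<integral>x. indicator (E N) x * Z x \<partial>M) - t * measure M (E N)"
      using int_EZ by (subst Bochner_Integration.integral_diff) (auto simp: less_top[symmetric])
    also have "(\<integral>x. indicator (E N) x * Z x \<partial>M) \<le> (\<integral>x. Z x \<partial>M)"
      using bounded int_Z int_EZ by (intro integral_mono) (auto simp: indicator_def)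
    finally show ?thesis by simp
  qed
  moreover have "(\<lambda>N. measure M (E N)) \<longlonglongrightarrow> measure M (\<Union>N. E N)"
    by (rule finite_Lim_measure_incseq) (auto simp: incseq_def E_def)
  ultimately have "t * measure M (\<Union>N. E N) \<le> (\<integral>x. Z x \<partial>M)"
    by (intro LIMSEQ_le_const2[where X="\<lambda>N. t * measure M (E N)"] tendsto_mult tendsto_const) auto
  moreover have "(\<Union>N. E N) = {x\<in>space M. \<exists>n\<ge>1. real n * t < (\<Sum>k<n. Z ((T ^^ k) x))}"
    unfolding E_def by force
  ultimately show ?thesis by simp
qed

(* Off the exceptional set of the maximal inequality the averages of Z along the orbit stay below
   epsilon / 2, and the first k terms contribute at most k C / N. *)
lemma cesaro_average_eventually_le_AE:
  fixes u :: "nat \<Rightarrow> 'a \<Rightarrow> real"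
  assumes bounded: "AE x in M. \<forall>n. 0 \<le> u n x \<and> u n x \<le> C"
    and dominated: "\<And>\<delta>. 0 < \<delta> \<Longrightarrow> \<exists>k Z. Z \<in> borel_measurable M \<and> (\<forall>x. 0 \<le> Z x \<and> Z x \<le> C)
      \<and> (\<integral>x. Z x \<partial>M) \<le> \<delta> \<and> (AE x in M. \<forall>n\<ge>k. u n x \<le> Z x)"
    and "0 < \<epsilon>"
  shows "AE x in M. eventually (\<lambda>N. (\<Sum>n<N. u n ((T ^^ n) x)) / real N \<le> \<epsilon>) sequentially"
proof (rule AE_small_exceptional_sets)
  fix d :: real assume "0 < d"
  define t where "t = \<epsilon> / 2"
  have "0 < t" using \<open>0 < \<epsilon>\<close> by (simp add: t_def)
  obtain k Z where Z_meas [measurable]: "Z \<in> borel_measurable M"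
    and Z_bounded: "\<And>x. 0 \<le> Z x \<and> Z x \<le> C" and Z_int: "(\<integral>x. Z x \<partial>M) \<le> d * t"
    and u_le_Z: "AE x in M. \<forall>n\<ge>k. u n x \<le> Z x"
    using dominated[of "d * t"] \<open>0 < d\<close> \<open>0 < t\<close> by auto
  define E where "E = {x\<in>space M. \<exists>n\<ge>1. real n * t < (\<Sum>j<n. Z ((T ^^ j) x))}"
  have "E \<in> sets M" unfolding E_def by measurable
  moreover have "measure M E \<le> d"
  proof -
    have "t * measure M E \<le> t * d"
      using maximal_inequality[OF Z_meas Z_bounded \<open>0 < t\<close>] Z_int unfolding E_def by argo
    then show ?thesis using \<open>0 < t\<close> by simp
  qed
  moreover have "AE x in M. \<forall>n. 0 \<le> u n ((T ^^ n) x) \<and> u n ((T ^^ n) x) \<le> C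
      \<and> (k \<le> n \<longrightarrow> u n ((T ^^ n) x) \<le> Z ((T ^^ n) x))"
    using AE_funpow[OF bounded] AE_funpow[OF u_le_Z] by (auto simp: AE_all_countable)
  with AE_space have "AE x in M. eventually (\<lambda>N. (\<Sum>n<N. u n ((T ^^ n) x)) / real N \<le> \<epsilon>) sequentially
      \<or> x \<in> E"
  proof eventually_elim
    case (elim x)
    show ?case
    proof (rule disjCI)
      assume "x \<notin> E"
      then have "(\<Sum>n<N. Z ((T ^^ n) x)) \<le> real N * t" for N
        using elim by (cases "N = 0") (auto simp: E_def not_less)
      then have "eventually (\<lambda>N. (\<Sum>n<N. u n ((T ^^ n) x)) / real N \<le> 2 * t) sequentially"
        using elim Z_bounded \<open>0 < t\<close> by (intro cesaro_eventually_le[where C=C and k=k and Z="\<lambda>n. Z ((T ^^ n) x)"]) auto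
      then show "eventually (\<lambda>N. (\<Sum>n<N. u n ((T ^^ n) x)) / real N \<le> \<epsilon>) sequentially"
        by (simp add: t_def)
    qed
  qed
  ultimately show "\<exists>E\<in>sets M. measure M E \<le> d
      \<and> (AE x in M. eventually (\<lambda>N. (\<Sum>n<N. u n ((T ^^ n) x)) / real N \<le> \<epsilon>) sequentially \<or> x \<in> E)"
    by blast
qed

lemma cesaro_average_tendsto_zero_AE:
  fixes u :: "nat \<Rightarrow> 'a \<Rightarrow> real"
  assumes bounded: "AE x in M. \<forall>n. 0 \<le> u n x \<and> u n x \<le> C"
    and dominated: "\<And>\<delta>. 0 < \<delta> \<Longrightarrow> \<exists>k Z. Z \<in> borel_measurable M \<and> (\<forall>x. 0 \<le> Z x \<and> Z x \<le> C)
      \<and> (\<integral>x. Z x \<partial>M) \<le> \<delta> \<and> (AE x in M. \<forall>n\<ge>k. u n x \<le> Z x)"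
  shows "AE x in M. (\<lambda>N. (\<Sum>n<N. u n ((T ^^ n) x)) / real N) \<longlonglongrightarrow> 0"
proof -
  have "AE x in M. eventually (\<lambda>N. (\<Sum>n<N. u n ((T ^^ n) x)) / real N \<le> 1 / (real m + 1)) sequentially" for m
    by (rule cesaro_average_eventually_le_AE[OF bounded dominated]) (auto intro: divide_pos_pos)
  then have "AE x in M. \<forall>m. eventually (\<lambda>N. (\<Sum>n<N. u n ((T ^^ n) x)) / real N \<le> 1 / (real m + 1)) sequentially"
    by (simp add: AE_all_countable)
  moreover have "AE x in M. \<forall>n. 0 \<le> u n ((T ^^ n) x)"
    using AE_funpow[OF bounded] by (auto simp: AE_all_countable)
  ultimately show ?thesis
    by eventually_elim (auto intro!: tendsto_zero_if_eventually_le_inverse divide_nonneg_nonneg sum_nonneg)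
qed

lemma cond_exp_funpow:
  fixes f :: "'a \<Rightarrow> real"
  assumes F: "sigma_finite_subalgebra M F" and F': "sigma_finite_subalgebra M F'"
    and sets_F': "sets F' = {(T ^^ n) -` A \<inter> space M | A. A \<in> sets F}"
    and f [measurable]: "integrable M f"
  shows "AE x in M. real_cond_exp M F' (\<lambda>x. f ((T ^^ n) x)) x = real_cond_exp M F f ((T ^^ n) x)"
proof -
  interpret F: sigma_finite_subalgebra M F by (rule F)
  interpret F': sigma_finite_subalgebra M F' by (rule F')
  define E where "E = real_cond_exp M F f"
  have E_F: "E \<in> borel_measurable F" unfolding E_def by (rule borel_measurable_cond_exp)
  have [measurable]: "E \<in> borel_measurable M" unfolding E_def by (rule borel_measurable_cond_exp2)
  have int_E: "integrable M E" unfolding E_def by (rule F.real_cond_exp_int(1)[OF f])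
  have space_F: "space F = space M" and space_F': "space F' = space M"
    using F.subalg F'.subalg by (auto simp: subalgebra_def)
  show ?thesis unfolding E_def[symmetric]
  proof (rule F'.real_cond_exp_charact)
    show "integrable M (\<lambda>x. f ((T ^^ n) x))" "integrable M (\<lambda>x. E ((T ^^ n) x))"
      using integrable_funpow_iff f int_E by auto
    show "(\<lambda>x. E ((T ^^ n) x)) \<in> borel_measurable F'"
    proof (rule measurableI)
      fix B :: "real set" assume "B \<in> sets borel"
      then have "E -` B \<inter> space F \<in> sets F" by (rule measurable_sets[OF E_F])
      moreover have "(\<lambda>x. E ((T ^^ n) x)) -` B \<inter> space F' = (T ^^ n) -` (E -` B \<inter> space F) \<inter> space M"
        using space_F space_F' measurable_space[OF measurable_funpow] by auto
      ultimately show "(\<lambda>x. E ((T ^^ n) x)) -` B \<inter> space F' \<in> sets F'"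
        unfolding sets_F' by blast
    qed simp
    fix A' assume "A' \<in> sets F'"
    then obtain A where A: "A \<in> sets F" "A' = (T ^^ n) -` A \<inter> space M" unfolding sets_F' by auto
    have [measurable]: "A \<in> sets M" using A(1) F.subalg by (auto simp: subalgebra_def)
    have indicator_A': "indicator A' x = (indicator A ((T ^^ n) x) :: real)" if "x \<in> space M" for x
      using that A(2) by (auto simp: indicator_def)
    have "(\<integral>x\<in>A'. f ((T ^^ n) x) \<partial>M) = (\<integral>x. indicator A ((T ^^ n) x) * f ((T ^^ n) x) \<partial>M)"
      unfolding set_lebesgue_integral_def by (rule Bochner_Integration.integral_cong) (auto simp: indicator_A')
    also have "\<dots> = (\<integral>x\<in>A. f x \<partial>M)"
      unfolding set_lebesgue_integral_def by (simp add: integral_funpow[of "\<lambda>x. indicator A x * f x"])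
    also have "\<dots> = (\<integral>x\<in>A. E x \<partial>M)" unfolding E_def by (rule F.real_cond_exp_intA[OF f A(1)])
    also have "\<dots> = (\<integral>x. indicator A ((T ^^ n) x) * E ((T ^^ n) x) \<partial>M)"
      unfolding set_lebesgue_integral_def by (simp add: integral_funpow[of "\<lambda>x. indicator A x * E x"])
    also have "\<dots> = (\<integral>x\<in>A'. E ((T ^^ n) x) \<partial>M)"
      unfolding set_lebesgue_integral_def by (rule Bochner_Integration.integral_cong) (auto simp: indicator_A')
    finally show "(\<integral>x\<in>A'. f ((T ^^ n) x) \<partial>M) = (\<integral>x\<in>A'. E ((T ^^ n) x) \<partial>M)" .
  qed
qed

end

section \<open>Conditional expectations and Doob's maximal inequality\<close>

context sigma_finite_subalgebra
begin

lemma real_cond_exp_abs_le: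
  assumes [measurable]: "integrable M h"
  shows "AE x in M. \<bar>real_cond_exp M F h x\<bar> \<le> real_cond_exp M F (\<lambda>x. \<bar>h x\<bar>) x"
proof -
  have "AE x in M. real_cond_exp M F h x \<le> real_cond_exp M F (\<lambda>x. \<bar>h x\<bar>) x"
    "AE x in M. real_cond_exp M F (\<lambda>x. - h x) x \<le> real_cond_exp M F (\<lambda>x. \<bar>h x\<bar>) x"
    by (rule real_cond_exp_mono; use assms in auto)+
  moreover have "AE x in M. real_cond_exp M F (\<lambda>x. - h x) x = - real_cond_exp M F h x"
    using real_cond_exp_cmult[OF assms, of "-1"] by simp
  ultimately show ?thesis by eventually_elim simp
qed

lemma integral_abs_real_cond_exp_le:
  assumes [measurable]: "integrable M h"
  shows "(\<integral>x. \<bar>real_cond_exp M F h x\<bar> \<partial>M) \<le> (\<integral>x. \<bar>h x\<bar> \<partial>M)"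
proof -
  have "(\<integral>x. \<bar>real_cond_exp M F h x\<bar> \<partial>M) \<le> (\<integral>x. real_cond_exp M F (\<lambda>x. \<bar>h x\<bar>) x \<partial>M)"
    using real_cond_exp_abs_le[OF assms] assms by (intro integral_mono_AE) auto
  also have "\<dots> = (\<integral>x. \<bar>h x\<bar> \<partial>M)" using assms by (intro real_cond_exp_int(2)) auto
  finally show ?thesis .
qed

end

lemma (in prob_space) measure_le_integral_abs_cond_exp:
  assumes F: "sigma_finite_subalgebra M F" and h [measurable]: "integrable M h"
    and A: "A \<in> sets F" and large: "\<And>x. x \<in> A \<Longrightarrow> l \<le> \<bar>real_cond_exp M F h x\<bar>"
  shows "l * measure M A \<le> (\<integral>x. indicator A x * \<bar>h x\<bar> \<partial>M)"
proof -
  interpret F: sigma_finite_subalgebra M F by (rule F)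
  have [measurable]: "A \<in> sets M" using A F.subalg by (auto simp: subalgebra_def)
  have int_cond_exp: "integrable M (\<lambda>x. indicator A x * f x)" if "integrable M f" for f :: "'a \<Rightarrow> real"
    using integrable_real_mult_indicator[OF _ that, of A] by (simp add: mult.commute)
  have "l * measure M A = (\<integral>x. indicator A x * l \<partial>M)" by simp
  also have "\<dots> \<le> (\<integral>x. indicator A x * real_cond_exp M F (\<lambda>x. \<bar>h x\<bar>) x \<partial>M)"
  proof (rule integral_mono_AE)
    show "AE x in M. indicator A x * l \<le> indicator A x * real_cond_exp M F (\<lambda>x. \<bar>h x\<bar>) x"
      using F.real_cond_exp_abs_le[OF h] by eventually_elim (auto simp: indicator_def dest: large)
  qed (auto simp: less_top[symmetric] intro!: int_cond_exp h)
  also have "\<dots> = (\<integral>x. indicator A x * \<bar>h x\<bar> \<partial>M)"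
    using A int_cond_exp[OF integrable_abs[OF h]] by (intro F.real_cond_exp_intg(2)) auto
  finally show ?thesis .
qed

lemma first_passage_sets:
  fixes P :: "nat \<Rightarrow> 'a \<Rightarrow> bool"
  shows "disjoint_family (\<lambda>k. {x\<in>S. P k x \<and> (\<forall>j<k. \<not> P j x)})"
    and "(\<Union>k. {x\<in>S. P k x \<and> (\<forall>j<k. \<not> P j x)}) = {x\<in>S. \<exists>k. P k x}"
proof -
  show "disjoint_family (\<lambda>k. {x\<in>S. P k x \<and> (\<forall>j<k. \<not> P j x)})"
    unfolding disjoint_family_on_def
  proof (intro ballI impI)
    fix j k :: nat assume "j \<noteq> k"
    then consider "j < k" | "k < j" by linarith
    then show "{x\<in>S. P j x \<and> (\<forall>i<j. \<not> P i x)} \<inter> {x\<in>S. P k x \<and> (\<forall>i<k. \<not> P i x)} = {}"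
      by cases blast+
  qed
  show "(\<Union>k. {x\<in>S. P k x \<and> (\<forall>j<k. \<not> P j x)}) = {x\<in>S. \<exists>k. P k x}"
  proof (intro equalityI subsetI)
    fix x assume x: "x \<in> {x\<in>S. \<exists>k. P k x}"
    then have "P (LEAST k. P k x) x" by (intro LeastI_ex[of "\<lambda>k. P k x"]) blast
    moreover have "\<not> P j x" if "j < (LEAST k. P k x)" for j
      using not_less_Least[OF that] .
    ultimately show "x \<in> (\<Union>k. {x\<in>S. P k x \<and> (\<forall>j<k. \<not> P j x)})" using x by blast
  qed auto
qed

lemma (in prob_space) doob_maximal_inequality:
  fixes G :: "nat \<Rightarrow> 'a measure" and h :: "'a \<Rightarrow> real"
  assumes G: "\<And>k. sigma_finite_subalgebra M (G k)"
    and mono: "\<And>j k. j \<le> k \<Longrightarrow> sets (G j) \<subseteq> sets (G k)"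
    and h [measurable]: "integrable M h"
  shows "l * measure M {x\<in>space M. \<exists>k. l \<le> \<bar>real_cond_exp M (G k) h x\<bar>} \<le> (\<integral>x. \<bar>h x\<bar> \<partial>M)"
proof -
  define Y where "Y k = real_cond_exp M (G k) h" for k
  have space_G: "space (G k) = space M" for k
    using G[of k] by (auto simp: sigma_finite_subalgebra_def subalgebra_def)
  have Y_G: "Y j \<in> borel_measurable (G k)" if "j \<le> k" for j k
  proof (rule measurable_from_subalg)
    show "subalgebra (G k) (G j)" using space_G mono[OF that] by (auto simp: subalgebra_def)
  qed (simp add: Y_def borel_measurable_cond_exp)
  define A where "A k = {x\<in>space M. l \<le> \<bar>Y k x\<bar> \<and> (\<forall>j<k. \<not> l \<le> \<bar>Y j x\<bar>)}" for k
  have A_G: "A k \<in> sets (G k)" for k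
  proof -
    have [measurable]: "Y j \<in> borel_measurable (G k)" if "j \<le> k" for j using Y_G that by auto
    have "{x\<in>space (G k). l \<le> \<bar>Y k x\<bar> \<and> (\<forall>j<k. \<not> l \<le> \<bar>Y j x\<bar>)} \<in> sets (G k)" by measurable
    then show ?thesis unfolding A_def space_G .
  qed
  have A_M: "A k \<in> sets M" for k
    using A_G[of k] G[of k] by (auto simp: sigma_finite_subalgebra_def subalgebra_def)
  note disjoint = first_passage_sets(1)[of "space M" "\<lambda>k x. l \<le> \<bar>Y k x\<bar>", folded A_def]
  note union = first_passage_sets(2)[of "space M" "\<lambda>k x. l \<le> \<bar>Y k x\<bar>", folded A_def]
  have int_ind: "integrable M (\<lambda>x. indicator B x * \<bar>h x\<bar>)" if "B \<in> sets M" for B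
    using integrable_real_mult_indicator[OF that integrable_abs[OF h]] by (simp add: mult.commute)
  have "(\<Sum>k<m. l * measure M (A k)) \<le> (\<integral>x. \<bar>h x\<bar> \<partial>M)" for m
  proof -
    have "(\<Sum>k<m. l * measure M (A k)) \<le> (\<Sum>k<m. \<integral>x. indicator (A k) x * \<bar>h x\<bar> \<partial>M)"
      by (intro sum_mono measure_le_integral_abs_cond_exp[OF G h A_G]) (simp add: A_def Y_def)
    also have "\<dots> = (\<integral>x. (\<Sum>k<m. indicator (A k) x) * \<bar>h x\<bar> \<partial>M)"
      unfolding sum_distrib_right using A_M int_ind by (intro Bochner_Integration.integral_sum[symmetric]) auto
    also have "\<dots> = (\<integral>x. indicator (\<Union>k<m. A k) x * \<bar>h x\<bar> \<partial>M)"
      using disjoint_family_on_mono[OF subset_UNIV disjoint] by (simp add: indicator_UN_disjoint)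
    also have "\<dots> \<le> (\<integral>x. \<bar>h x\<bar> \<partial>M)"
      using A_M int_ind[of "\<Union>k<m. A k"] h by (intro integral_mono) (auto simp: indicator_def)
    finally show ?thesis .
  qed
  moreover have "(\<lambda>k. l * measure M (A k)) sums (l * measure M (\<Union>k. A k))"
    using A_M disjoint by (intro sums_mult finite_measure_UNION) auto
  ultimately have "l * measure M (\<Union>k. A k) \<le> (\<integral>x. \<bar>h x\<bar> \<partial>M)"
    unfolding sums_def by (intro LIMSEQ_le_const2) auto
  then show ?thesis unfolding union Y_def .
qed

lemma (in finite_measure) measure_sym_diff_le:
  assumes "A \<in> sets M" "B \<in> sets M" "C \<in> sets M"
  shows "measure M (sym_diff A C) \<le> measure M (sym_diff A B) + measure M (sym_diff B C)"
proof -
  have "measure M (sym_diff A C) \<le> measure M (sym_diff A B \<union> sym_diff B C)"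
    using assms by (intro finite_measure_mono) auto
  also have "\<dots> \<le> measure M (sym_diff A B) + measure M (sym_diff B C)"
    using assms by (intro measure_Un_le) auto
  finally show ?thesis .
qed

lemma (in prob_space) AE_real_cond_exp_unit_interval:
  assumes F: "sigma_finite_subalgebra M F" and f: "integrable M f" and bounds: "\<And>x. 0 \<le> f x \<and> f x \<le> 1"
  shows "AE x in M. 0 \<le> real_cond_exp M F f x \<and> real_cond_exp M F f x \<le> 1"
proof -
  interpret F: sigma_finite_subalgebra M F by (rule F)
  have "AE x in M. 0 \<le> real_cond_exp M F f x" "AE x in M. real_cond_exp M F f x \<le> 1"
    using bounds by (auto intro!: F.real_cond_exp_ge_c F.real_cond_exp_le_c f)
  then show ?thesis by eventually_elim simp
qed

section \<open>The distance of distributions on a finite alphabet\<close>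

lemma dist_max_nonneg: "0 \<le> dist_max p q"
proof -
  have "\<bar>p undefined - q undefined\<bar> \<le> dist_max p q" unfolding dist_max_def by (intro Max_ge) auto
  then show ?thesis by linarith
qed

lemma dist_max_le_iff: "dist_max p q \<le> B \<longleftrightarrow> (\<forall>a. \<bar>p a - q a\<bar> \<le> B)"
  unfolding dist_max_def by (subst Max_le_iff) auto

lemma dist_max_triangle: "dist_max p q \<le> dist_max p r + dist_max r q"
  unfolding dist_max_le_iff
proof
  fix a
  have "\<bar>p a - r a\<bar> \<le> dist_max p r" "\<bar>r a - q a\<bar> \<le> dist_max r q"
    using order_refl[of "dist_max p r"] order_refl[of "dist_max r q"] unfolding dist_max_le_iff by blast+
  then show "\<bar>p a - q a\<bar> \<le> dist_max p r + dist_max r q" by linarith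
qed

lemma dist_max_le_sum: "dist_max p q \<le> (\<Sum>a\<in>UNIV. \<bar>p a - q a\<bar>)"
  unfolding dist_max_le_iff by (intro allI member_le_sum) auto

lemma dist_max_le_1:
  assumes "\<And>a. 0 \<le> p a \<and> p a \<le> 1" "\<And>a. 0 \<le> q a \<and> q a \<le> 1"
  shows "dist_max p q \<le> 1"
  unfolding dist_max_le_iff
proof
  fix a
  show "\<bar>p a - q a\<bar> \<le> 1" using assms(1)[of a] assms(2)[of a] by (simp add: abs_le_iff)
qed

lemma dist_max_le_min_bound:
  assumes "dist_max p q \<le> 1" and "x \<notin> S \<Longrightarrow> dist_max p r \<le> \<epsilon>" and "0 \<le> \<epsilon>"
  shows "dist_max p q \<le> min 1 (\<epsilon> + indicator S x + (\<Sum>a\<in>UNIV. \<bar>q a - r a\<bar>))"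
proof (cases "x \<in> S")
  case True
  have "0 \<le> (\<Sum>a\<in>UNIV. \<bar>q a - r a\<bar>)" by (simp add: sum_nonneg)
  with True assms(1,3) show ?thesis by simp
next
  case False
  have "dist_max p q \<le> dist_max p r + dist_max r q" by (rule dist_max_triangle)
  also have "dist_max r q \<le> (\<Sum>a\<in>UNIV. \<bar>q a - r a\<bar>)"
    using dist_max_le_sum[of r q] by (simp add: abs_minus_commute)
  finally show ?thesis using False assms by simp
qed

section \<open>Filtrations increasing to a limit\<close>

locale prob_filtration = prob_space M for M :: "'a measure" +
  fixes G :: "nat \<Rightarrow> 'a measure" and Ginf :: "'a measure"
  assumes subalgebra_G: "\<And>k. sigma_finite_subalgebra M (G k)"
    and mono_G: "\<And>j k. j \<le> k \<Longrightarrow> sets (G j) \<subseteq> sets (G k)"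
    and subalgebra_Ginf: "sigma_finite_subalgebra M Ginf"
    and sets_Ginf: "sets Ginf = sigma_sets (space M) (\<Union>k. sets (G k))"
begin

lemma space_G: "space (G k) = space M"
  using subalgebra_G[of k] by (auto simp: sigma_finite_subalgebra_def subalgebra_def)

lemma sets_G_subset: "sets (G k) \<subseteq> sets M"
  using subalgebra_G[of k] by (auto simp: sigma_finite_subalgebra_def subalgebra_def)

lemma sets_Ginf_subset: "sets Ginf \<subseteq> sets M"
  using subalgebra_Ginf by (auto simp: sigma_finite_subalgebra_def subalgebra_def)

definition approximable :: "'a set \<Rightarrow> bool" where
  "approximable A \<longleftrightarrow> (\<forall>e>0. \<exists>k. \<exists>B\<in>sets (G k). measure M (sym_diff A B) < e)"

lemma approximable_sets_G: "A \<in> sets (G k) \<Longrightarrow> approximable A"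
  unfolding approximable_def by (intro allI impI exI[of _ k] bexI[of _ A]) auto

lemma approximable_Diff_space:
  assumes "A \<in> sets M" "approximable A"
  shows "approximable (space M - A)"
  unfolding approximable_def
proof (intro allI impI)
  fix e :: real assume "0 < e"
  then obtain k B where B: "B \<in> sets (G k)" "measure M (sym_diff A B) < e"
    using assms(2) unfolding approximable_def by blast
  have "A \<subseteq> space M" using assms(1) by (rule sets.sets_into_space)
  moreover have "B \<subseteq> space M" using B(1) sets_G_subset sets.sets_into_space by blast
  ultimately have "sym_diff (space M - A) (space M - B) = sym_diff A B" by blast
  moreover have "space M - B \<in> sets (G k)" using B(1) space_G[of k] sets.compl_sets[of B "G k"] by simp
  ultimately show "\<exists>k. \<exists>B\<in>sets (G k). measure M (sym_diff (space M - A) B) < e"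
    using B(2) by (intro exI[of _ k] bexI[of _ "space M - B"]) simp_all
qed

lemma approximable_limit:
  assumes "A \<in> sets M"
    and "\<And>e. 0 < e \<Longrightarrow> \<exists>A'\<in>sets M. approximable A' \<and> measure M (sym_diff A A') < e"
  shows "approximable A"
  unfolding approximable_def
proof (intro allI impI)
  fix e :: real assume "0 < e"
  then obtain A' where A': "A' \<in> sets M" "approximable A'" "measure M (sym_diff A A') < e / 2"
    using assms(2)[of "e / 2"] by auto
  then obtain k B where B: "B \<in> sets (G k)" "measure M (sym_diff A' B) < e / 2"
    using \<open>0 < e\<close> unfolding approximable_def by (meson half_gt_zero)
  have "B \<in> sets M" using B(1) sets_G_subset by blast
  then have "measure M (sym_diff A B) < e"
    using measure_sym_diff_le[OF assms(1) A'(1), of B] B(2) A'(3) by simp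
  with B show "\<exists>k. \<exists>B\<in>sets (G k). measure M (sym_diff A B) < e" by blast
qed

lemma approximable_Un:
  assumes "A \<in> sets M" "A' \<in> sets M" "approximable A" "approximable A'"
  shows "approximable (A \<union> A')"
  unfolding approximable_def
proof (intro allI impI)
  fix e :: real assume "0 < e"
  then obtain k B k' B' where B: "B \<in> sets (G k)" "measure M (sym_diff A B) < e / 2"
    and B': "B' \<in> sets (G k')" "measure M (sym_diff A' B') < e / 2"
    using assms(3,4) unfolding approximable_def by (meson half_gt_zero)
  have "B \<in> sets M" "B' \<in> sets M" using B(1) B'(1) sets_G_subset by blast+
  have "measure M (sym_diff (A \<union> A') (B \<union> B')) \<le> measure M (sym_diff A B \<union> sym_diff A' B')"
    using assms \<open>B \<in> sets M\<close> \<open>B' \<in> sets M\<close> by (intro finite_measure_mono) auto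
  also have "\<dots> \<le> measure M (sym_diff A B) + measure M (sym_diff A' B')"
    using assms \<open>B \<in> sets M\<close> \<open>B' \<in> sets M\<close> by (intro measure_Un_le) auto
  also have "\<dots> < e" using B(2) B'(2) by simp
  finally have "measure M (sym_diff (A \<union> A') (B \<union> B')) < e" .
  moreover have "B \<union> B' \<in> sets (G (max k k'))"
    using B(1) B'(1) mono_G[of k "max k k'"] mono_G[of k' "max k k'"] by auto
  ultimately show "\<exists>k. \<exists>C\<in>sets (G k). measure M (sym_diff (A \<union> A') C) < e" by blast
qed

lemma approximable_UNION:
  fixes A :: "nat \<Rightarrow> 'a set"
  assumes A: "\<And>i. A i \<in> sets M" "\<And>i. approximable (A i)"
  shows "approximable (\<Union>i. A i)"
proof (rule approximable_limit)
  have finite_unions: "approximable (\<Union>i<n. A i)" for n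
  proof (induction n)
    case 0
    show ?case by (simp add: approximable_sets_G[OF sets.empty_sets])
  next
    case (Suc n)
    then show ?case using A by (simp add: lessThan_Suc Un_commute approximable_Un)
  qed
  have lim: "(\<lambda>n. measure M (\<Union>i<n. A i)) \<longlonglongrightarrow> measure M (\<Union>n. \<Union>i<n. A i)"
    using A(1) by (intro finite_Lim_measure_incseq) (auto 4 3 simp: incseq_def intro: less_le_trans)
  have "(\<Union>n. \<Union>i<n. A i) = (\<Union>i. A i)" by blast
  then have "(\<lambda>n. measure M (\<Union>i. A i) - measure M (\<Union>i<n. A i)) \<longlonglongrightarrow> 0"
    using tendsto_diff[OF tendsto_const[of "measure M (\<Union>i. A i)"] lim] by simp
  moreover have "measure M (sym_diff (\<Union>i. A i) (\<Union>i<n. A i)) = measure M (\<Union>i. A i) - measure M (\<Union>i<n. A i)" for n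
    using A(1) by (subst finite_measure_Diff[symmetric]) (auto intro!: arg_cong[where f="measure M"])
  ultimately have sym_diff_lim: "(\<lambda>n. measure M (sym_diff (\<Union>i. A i) (\<Union>i<n. A i))) \<longlonglongrightarrow> 0"
    by simp
  then show "\<exists>A'\<in>sets M. approximable A' \<and> measure M (sym_diff (\<Union>i. A i) A') < e" if "0 < e" for e
  proof -
    obtain n where "measure M (sym_diff (\<Union>i. A i) (\<Union>i<n. A i)) < e"
      using order_tendstoD(2)[OF sym_diff_lim \<open>0 < e\<close>] by (auto simp: eventually_sequentially)
    then show ?thesis using A(1) finite_unions by blast
  qed
qed (use A in auto)

(* The approximable sets form a Dynkin system containing the intersection-stable generator. *)
lemma approximable_sets_Ginf:
  assumes "A \<in> sets Ginf"
  shows "approximable A"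
proof -
  let ?G = "\<Union>k. sets (G k)"
  have sigma_sets_subset: "sigma_sets (space M) ?G \<subseteq> sets M"
    using sets_G_subset by (intro sets.sigma_sets_subset) auto
  have "Int_stable ?G"
  proof (rule Int_stableI)
    fix a b assume "a \<in> ?G" "b \<in> ?G"
    then obtain j k where "a \<in> sets (G j)" "b \<in> sets (G k)" by auto
    then have "a \<in> sets (G (max j k))" "b \<in> sets (G (max j k))"
      using mono_G[of j "max j k"] mono_G[of k "max j k"] by auto
    then show "a \<inter> b \<in> ?G" by blast
  qed
  moreover have "?G \<subseteq> Pow (space M)" using sets_G_subset sets.sets_into_space by blast
  moreover have "A \<in> sigma_sets (space M) ?G" using assms sets_Ginf by simp
  ultimately show ?thesis
  proof (induction rule: sigma_sets_induct_disjoint)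
    case (basic A)
    then obtain k where "A \<in> sets (G k)" by blast
    then show ?case by (rule approximable_sets_G)
  next
    case empty
    show ?case by (rule approximable_sets_G[OF sets.empty_sets])
  next
    case (compl A)
    then show ?case using sigma_sets_subset by (intro approximable_Diff_space) auto
  next
    case (union A)
    then show ?case using sigma_sets_subset by (intro approximable_UNION) auto
  qed
qed

definition cond_exp_error :: "nat \<Rightarrow> ('a \<Rightarrow> real) \<Rightarrow> real" where
  "cond_exp_error k g = (\<integral>x. \<bar>g x - real_cond_exp M (G k) g x\<bar> \<partial>M)"

lemma cond_exp_error_nonneg: "0 \<le> cond_exp_error k g"
  unfolding cond_exp_error_def by simp

lemma cond_exp_error_le:
  assumes g [measurable]: "integrable M g"
  shows "cond_exp_error k g \<le> 2 * (\<integral>x. \<bar>g x\<bar> \<partial>M)"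
proof -
  interpret G: sigma_finite_subalgebra M "G k" by (rule subalgebra_G)
  have int_E: "integrable M (real_cond_exp M (G k) g)" by (rule G.real_cond_exp_int(1)[OF g])
  have "cond_exp_error k g \<le> (\<integral>x. \<bar>g x\<bar> + \<bar>real_cond_exp M (G k) g x\<bar> \<partial>M)"
    unfolding cond_exp_error_def using int_E g by (intro integral_mono) auto
  also have "\<dots> = (\<integral>x. \<bar>g x\<bar> \<partial>M) + (\<integral>x. \<bar>real_cond_exp M (G k) g x\<bar> \<partial>M)"
    using int_E g by (intro Bochner_Integration.integral_add) auto
  also have "\<dots> \<le> 2 * (\<integral>x. \<bar>g x\<bar> \<partial>M)"
    using G.integral_abs_real_cond_exp_le[OF g] by simp
  finally show ?thesis .
qed

lemma cond_exp_error_add: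
  assumes f [measurable]: "integrable M f" and g [measurable]: "integrable M g"
  shows "cond_exp_error k (\<lambda>x. f x + g x) \<le> cond_exp_error k f + cond_exp_error k g"
proof -
  interpret G: sigma_finite_subalgebra M "G k" by (rule subalgebra_G)
  define Ef where "Ef = real_cond_exp M (G k) f"
  define Eg where "Eg = real_cond_exp M (G k) g"
  have int: "integrable M Ef" "integrable M Eg"
    unfolding Ef_def Eg_def using f g by auto
  have "cond_exp_error k (\<lambda>x. f x + g x) = (\<integral>x. \<bar>(f x - Ef x) + (g x - Eg x)\<bar> \<partial>M)"
    unfolding cond_exp_error_def Ef_def Eg_def
    using G.real_cond_exp_add[OF f g] by (intro integral_cong_AE) (auto elim!: eventually_mono)
  also have "\<dots> \<le> (\<integral>x. \<bar>f x - Ef x\<bar> + \<bar>g x - Eg x\<bar> \<partial>M)"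
    using int f g by (intro integral_mono) (auto intro: abs_triangle_ineq)
  also have "\<dots> = cond_exp_error k f + cond_exp_error k g"
    unfolding cond_exp_error_def Ef_def[symmetric] Eg_def[symmetric]
    using int f g by (intro Bochner_Integration.integral_add) auto
  finally show ?thesis .
qed

lemma cond_exp_error_cmult:
  assumes f [measurable]: "integrable M f"
  shows "cond_exp_error k (\<lambda>x. c * f x) = \<bar>c\<bar> * cond_exp_error k f"
proof -
  interpret G: sigma_finite_subalgebra M "G k" by (rule subalgebra_G)
  have "cond_exp_error k (\<lambda>x. c * f x) = (\<integral>x. \<bar>c\<bar> * \<bar>f x - real_cond_exp M (G k) f x\<bar> \<partial>M)"
    unfolding cond_exp_error_def using G.real_cond_exp_cmult[OF f, of c]
    by (intro integral_cong_AE) (auto elim!: eventually_mono simp: abs_mult[symmetric] right_diff_distrib)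
  then show ?thesis unfolding cond_exp_error_def by simp
qed

lemma cond_exp_error_le_approx:
  assumes f: "integrable M f" and g: "integrable M g"
  shows "cond_exp_error k f \<le> cond_exp_error k g + 2 * (\<integral>x. \<bar>f x - g x\<bar> \<partial>M)"
proof -
  have "cond_exp_error k f \<le> cond_exp_error k g + cond_exp_error k (\<lambda>x. f x - g x)"
    using cond_exp_error_add[OF g, of "\<lambda>x. f x - g x"] f g by simp
  also have "cond_exp_error k (\<lambda>x. f x - g x) \<le> 2 * (\<integral>x. \<bar>f x - g x\<bar> \<partial>M)"
    using f g by (intro cond_exp_error_le) auto
  finally show ?thesis by simp
qed

lemma tendsto_cond_exp_error_approx:
  assumes f: "integrable M f" and s: "\<And>i. integrable M (s i)"
    and approx: "(\<lambda>i. \<integral>x. \<bar>f x - s i x\<bar> \<partial>M) \<longlonglongrightarrow> 0"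
    and error_s: "\<And>i. (\<lambda>k. cond_exp_error k (s i)) \<longlonglongrightarrow> 0"
  shows "(\<lambda>k. cond_exp_error k f) \<longlonglongrightarrow> 0"
proof (rule order_tendstoI)
  fix r :: real assume "0 < r"
  then obtain i where i: "(\<integral>x. \<bar>f x - s i x\<bar> \<partial>M) < r / 4"
    using order_tendstoD(2)[OF approx, of "r / 4"] unfolding eventually_sequentially by auto
  have "eventually (\<lambda>k. cond_exp_error k (s i) < r / 2) sequentially"
    using \<open>0 < r\<close> by (intro order_tendstoD(2)[OF error_s]) simp
  then show "eventually (\<lambda>k. cond_exp_error k f < r) sequentially"
  proof (rule eventually_mono)
    fix k assume "cond_exp_error k (s i) < r / 2"
    then show "cond_exp_error k f < r" using cond_exp_error_le_approx[OF f s, of k i] i by linarith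
  qed
qed (auto intro: always_eventually less_le_trans[OF _ cond_exp_error_nonneg])

lemma cond_exp_error_indicator_eq_0:
  assumes "B \<in> sets (G k)"
  shows "cond_exp_error k (indicator B) = 0"
proof -
  interpret G: sigma_finite_subalgebra M "G k" by (rule subalgebra_G)
  have "B \<in> sets M" using assms sets_G_subset by blast
  then have "AE x in M. real_cond_exp M (G k) (indicator B) x = indicator B x"
    using assms by (intro G.real_cond_exp_F_meas) (auto simp: less_top[symmetric])
  then show ?thesis
    unfolding cond_exp_error_def using \<open>B \<in> sets M\<close>
    by (subst integral_cong_AE[where g="\<lambda>_. 0"]) (auto intro: borel_measurable_cond_exp2)
qed

lemma tendsto_cond_exp_error_indicator:
  assumes A: "A \<in> sets Ginf"
  shows "(\<lambda>k. cond_exp_error k (indicator A)) \<longlonglongrightarrow> 0"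
proof -
  have A_M: "A \<in> sets M" using A sets_Ginf_subset by blast
  have "\<forall>i. \<exists>k B. B \<in> sets (G k) \<and> measure M (sym_diff A B) < inverse (real (Suc i))"
  proof
    fix i
    have "0 < inverse (real (Suc i))" by simp
    then show "\<exists>k B. B \<in> sets (G k) \<and> measure M (sym_diff A B) < inverse (real (Suc i))"
      using approximable_sets_Ginf[OF A] unfolding approximable_def by blast
  qed
  then obtain j B where B: "\<And>i. B i \<in> sets (G (j i))"
    "\<And>i. measure M (sym_diff A (B i)) < inverse (real (Suc i))"
    by metis
  have B_M: "B i \<in> sets M" for i using B(1) sets_G_subset by blast
  have "(\<lambda>i. measure M (sym_diff A (B i))) \<longlonglongrightarrow> 0"
  proof (rule tendsto_sandwich[OF _ _ tendsto_const LIMSEQ_inverse_real_of_nat])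
    show "eventually (\<lambda>i. measure M (sym_diff A (B i)) \<le> inverse (real (Suc i))) sequentially"
      using B(2) less_imp_le by (intro always_eventually) blast
  qed simp
  moreover have "(\<integral>x. \<bar>indicator A x - indicator (B i) x\<bar> \<partial>M) = measure M (sym_diff A (B i))" for i
  proof -
    have "(\<lambda>x. \<bar>indicator A x - indicator (B i) x\<bar> :: real) = indicator (sym_diff A (B i))"
      by (auto simp: indicator_def)
    then show ?thesis using A_M B_M by simp
  qed
  ultimately have approx: "(\<lambda>i. \<integral>x. \<bar>indicator A x - indicator (B i) x :: real\<bar> \<partial>M) \<longlonglongrightarrow> 0"
    by simp
  have error_B: "(\<lambda>k. cond_exp_error k (indicator (B i))) \<longlonglongrightarrow> 0" for i
  proof (rule tendsto_eventually, rule eventually_sequentiallyI)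
    fix k assume "j i \<le> k"
    then have "B i \<in> sets (G k)" using B(1) mono_G by blast
    then show "cond_exp_error k (indicator (B i)) = 0" by (rule cond_exp_error_indicator_eq_0)
  qed
  have "integrable M (indicator A :: 'a \<Rightarrow> real)" "integrable M (indicator (B i) :: 'a \<Rightarrow> real)" for i
    using A_M B_M by (simp_all add: less_top[symmetric])
  then show ?thesis by (rule tendsto_cond_exp_error_approx[OF _ _ approx error_B])
qed

(* Levy's upward theorem in L1. *)
lemma tendsto_cond_exp_error:
  assumes "integrable M g" "g \<in> borel_measurable Ginf"
  shows "(\<lambda>k. cond_exp_error k g) \<longlonglongrightarrow> 0"
proof -
  have sub: "subalgebra M Ginf" using subalgebra_Ginf by (auto simp: sigma_finite_subalgebra_def)
  have "integrable (restr_to_subalg M Ginf) g" by (rule integrable_in_subalg[OF sub assms(2,1)])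
  then show ?thesis
  proof (induction rule: integrable_induct)
    case (base A c)
    then have "A \<in> sets Ginf" by (simp add: sets_restr_to_subalg[OF sub])
    then have "A \<in> sets M" using sets_Ginf_subset by blast
    then have "integrable M (indicator A :: 'a \<Rightarrow> real)" by (simp add: less_top[symmetric])
    moreover have "(\<lambda>x. indicator A x *\<^sub>R c) = (\<lambda>x. c * indicator A x)" by (simp add: fun_eq_iff)
    ultimately show ?case
      using tendsto_mult_right_zero[OF tendsto_cond_exp_error_indicator[OF \<open>A \<in> sets Ginf\<close>], of "\<bar>c\<bar>"]
      by (simp add: cond_exp_error_cmult)
  next
    case (add f g)
    then have "integrable M f" "integrable M g" using integrable_from_subalg[OF sub] by blast+
    show ?case
    proof (rule tendsto_sandwich[OF _ _ tendsto_const tendsto_add_zero[OF add.IH]])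
      show "eventually (\<lambda>k. cond_exp_error k (\<lambda>x. f x + g x) \<le> cond_exp_error k f + cond_exp_error k g) sequentially"
        using \<open>integrable M f\<close> \<open>integrable M g\<close> by (simp add: cond_exp_error_add)
    qed (simp add: cond_exp_error_nonneg)
  next
    case (lim f s)
    have f: "integrable M f" and s: "\<And>i. integrable M (s i)"
      using lim integrable_from_subalg[OF sub] by blast+
    have "(\<lambda>i. \<integral>x. \<bar>f x - s i x\<bar> \<partial>M) \<longlonglongrightarrow> (\<integral>x. 0 \<partial>M)"
    proof (rule integral_dominated_convergence[where w="\<lambda>x. 3 * \<bar>f x\<bar>"])
      show "AE x in M. (\<lambda>i. \<bar>f x - s i x\<bar>) \<longlonglongrightarrow> 0"
      proof (rule AE_I2)
        fix x assume "x \<in> space M"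
        then have "(\<lambda>i. f x - s i x) \<longlonglongrightarrow> f x - f x"
          using lim(2)[of x] by (intro tendsto_diff tendsto_const) (simp add: space_restr_to_subalg)
        then show "(\<lambda>i. \<bar>f x - s i x\<bar>) \<longlonglongrightarrow> 0" using tendsto_rabs_zero by fastforce
      qed
      show "AE x in M. norm \<bar>f x - s i x\<bar> \<le> 3 * \<bar>f x\<bar>" for i
      proof (rule AE_I2)
        fix x assume "x \<in> space M"
        then have "\<bar>s i x\<bar> \<le> 2 * \<bar>f x\<bar>" using lim(3)[of x i] by (simp add: space_restr_to_subalg)
        then show "norm \<bar>f x - s i x\<bar> \<le> 3 * \<bar>f x\<bar>" by simp
      qed
    qed (use f s in \<open>auto intro!: borel_measurable_integrable\<close>)
    then show ?case by (intro tendsto_cond_exp_error_approx[OF f s _ lim.IH]) simp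
  qed
qed

lemma cond_exp_tower:
  assumes "integrable M f"
  shows "AE x in M. real_cond_exp M (G k) (real_cond_exp M Ginf f) x = real_cond_exp M (G k) f x"
proof -
  interpret G: sigma_finite_subalgebra M "G k" by (rule subalgebra_G)
  have "sets (G k) \<subseteq> sets Ginf" unfolding sets_Ginf by auto
  then have "subalgebra Ginf (G k)"
    using subalgebra_Ginf space_G by (auto simp: sigma_finite_subalgebra_def subalgebra_def)
  moreover have "subalgebra M Ginf" using subalgebra_Ginf by (auto simp: sigma_finite_subalgebra_def)
  ultimately show ?thesis by (intro G.real_cond_exp_nested_subalg assms)
qed

lemma tendsto_L1_cond_exp:
  assumes f: "integrable M f"
  shows "(\<lambda>k. \<integral>x. \<bar>real_cond_exp M Ginf f x - real_cond_exp M (G k) f x\<bar> \<partial>M) \<longlonglongrightarrow> 0"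
proof -
  interpret Ginf: sigma_finite_subalgebra M Ginf by (rule subalgebra_Ginf)
  have "(\<lambda>k. cond_exp_error k (real_cond_exp M Ginf f)) \<longlonglongrightarrow> 0"
    using f by (intro tendsto_cond_exp_error borel_measurable_cond_exp) auto
  moreover have "cond_exp_error k (real_cond_exp M Ginf f)
      = (\<integral>x. \<bar>real_cond_exp M Ginf f x - real_cond_exp M (G k) f x\<bar> \<partial>M)" for k
    unfolding cond_exp_error_def using cond_exp_tower[OF f, of k]
    by (intro integral_cong_AE) (auto intro: borel_measurable_cond_exp2)
  ultimately show ?thesis by simp
qed

lemma cond_exp_increment:
  assumes f: "integrable M f" and "k \<le> n"
  shows "AE x in M. real_cond_exp M (G n) (\<lambda>x. real_cond_exp M Ginf f x - real_cond_exp M (G k) f x) x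
    = real_cond_exp M (G n) f x - real_cond_exp M (G k) f x"
proof -
  interpret G: sigma_finite_subalgebra M "G n" by (rule subalgebra_G)
  have int: "integrable M (real_cond_exp M Ginf f)" "integrable M (real_cond_exp M (G k) f)"
    using f subalgebra_Ginf subalgebra_G by (auto intro: sigma_finite_subalgebra.real_cond_exp_int(1))
  have "real_cond_exp M (G k) f \<in> borel_measurable (G n)"
  proof (rule measurable_from_subalg)
    show "subalgebra (G n) (G k)" using space_G mono_G[OF \<open>k \<le> n\<close>] by (auto simp: subalgebra_def)
  qed (rule borel_measurable_cond_exp)
  then have "AE x in M. real_cond_exp M (G n) (real_cond_exp M (G k) f) x = real_cond_exp M (G k) f x"
    using int by (intro G.real_cond_exp_F_meas)
  moreover have "AE x in M. real_cond_exp M (G n) (\<lambda>x. real_cond_exp M Ginf f x - real_cond_exp M (G k) f x) x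
      = real_cond_exp M (G n) (real_cond_exp M Ginf f) x - real_cond_exp M (G n) (real_cond_exp M (G k) f) x"
    using int by (intro G.real_cond_exp_diff)
  ultimately show ?thesis using cond_exp_tower[OF f, of n] by eventually_elim simp
qed

(* Doob's maximal inequality for the martingale E[h | G (k + j)], where
   h = E[f | Ginf] - E[f | G k]. *)
lemma measure_cond_exp_oscillation_le:
  assumes f [measurable]: "integrable M f" and "0 \<le> l"
  shows "l * measure M {x\<in>space M. \<exists>n\<ge>k. l < \<bar>real_cond_exp M (G n) f x - real_cond_exp M (G k) f x\<bar>}
    \<le> (\<integral>x. \<bar>real_cond_exp M Ginf f x - real_cond_exp M (G k) f x\<bar> \<partial>M)"
proof -
  define E where "E n = real_cond_exp M (G n) f" for n
  define h where "h x = real_cond_exp M Ginf f x - E k x" for x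
  have [measurable]: "E n \<in> borel_measurable M" for n unfolding E_def by (rule borel_measurable_cond_exp2)
  have int_h: "integrable M h"
    unfolding h_def E_def using f subalgebra_Ginf subalgebra_G
    by (auto intro: sigma_finite_subalgebra.real_cond_exp_int(1))
  have "AE x in M. \<forall>j. real_cond_exp M (G (k + j)) h x = E (k + j) x - E k x"
    unfolding AE_all_countable h_def E_def using f by (auto intro: cond_exp_increment)
  then have "AE x in M. (\<exists>n\<ge>k. l < \<bar>E n x - E k x\<bar>) \<longrightarrow> (\<exists>j. l \<le> \<bar>real_cond_exp M (G (k + j)) h x\<bar>)"
    by eventually_elim (metis le_add_diff_inverse less_imp_le)
  then have "measure M {x\<in>space M. \<exists>n\<ge>k. l < \<bar>E n x - E k x\<bar>}
      \<le> measure M {x\<in>space M. \<exists>j. l \<le> \<bar>real_cond_exp M (G (k + j)) h x\<bar>}"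
    by (intro finite_measure_mono_AE) (auto intro: borel_measurable_cond_exp2)
  then have "l * measure M {x\<in>space M. \<exists>n\<ge>k. l < \<bar>E n x - E k x\<bar>}
      \<le> l * measure M {x\<in>space M. \<exists>j. l \<le> \<bar>real_cond_exp M (G (k + j)) h x\<bar>}"
    using \<open>0 \<le> l\<close> by (rule mult_left_mono)
  also have "\<dots> \<le> (\<integral>x. \<bar>h x\<bar> \<partial>M)"
    using subalgebra_G mono_G int_h by (intro doob_maximal_inequality) auto
  finally show ?thesis unfolding h_def E_def .
qed

lemma AE_cond_exp_unit_interval:
  fixes f :: "'b::finite \<Rightarrow> 'a \<Rightarrow> real"
  assumes f: "\<And>b. integrable M (f b)" "\<And>b x. 0 \<le> f b x \<and> f b x \<le> 1"
  shows "AE x in M. \<forall>n b. 0 \<le> real_cond_exp M (G n) (f b) x \<and> real_cond_exp M (G n) (f b) x \<le> 1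
    \<and> 0 \<le> real_cond_exp M Ginf (f b) x \<and> real_cond_exp M Ginf (f b) x \<le> 1"
  using AE_real_cond_exp_unit_interval[OF subalgebra_G f] AE_real_cond_exp_unit_interval[OF subalgebra_Ginf f]
  by (simp add: AE_all_countable AE_finite_all)

lemma measure_cond_exp_oscillation_family_le:
  fixes f :: "'b::finite \<Rightarrow> 'a \<Rightarrow> real"
  assumes "\<And>b. integrable M (f b)" and "0 \<le> l"
  shows "l * measure M {x\<in>space M. \<exists>n\<ge>k. \<exists>b. l < \<bar>real_cond_exp M (G n) (f b) x - real_cond_exp M (G k) (f b) x\<bar>}
    \<le> (\<Sum>b\<in>UNIV. \<integral>x. \<bar>real_cond_exp M Ginf (f b) x - real_cond_exp M (G k) (f b) x\<bar> \<partial>M)"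
proof -
  define Osc where "Osc b = {x\<in>space M. \<exists>n\<ge>k. l < \<bar>real_cond_exp M (G n) (f b) x - real_cond_exp M (G k) (f b) x\<bar>}"
    for b
  have [measurable]: "Osc b \<in> sets M" for b
    unfolding Osc_def by (measurable; intro borel_measurable_cond_exp2)
  have Osc_Union: "{x\<in>space M. \<exists>n\<ge>k. \<exists>b. l < \<bar>real_cond_exp M (G n) (f b) x - real_cond_exp M (G k) (f b) x\<bar>}
      = (\<Union>b. Osc b)"
    unfolding Osc_def by blast
  have "l * measure M (\<Union>b. Osc b) \<le> (\<Sum>b\<in>UNIV. l * measure M (Osc b))"
    unfolding sum_distrib_left[symmetric] using \<open>0 \<le> l\<close> by (intro mult_left_mono measure_UNION_le) auto
  also have "\<dots> \<le> (\<Sum>b\<in>UNIV. \<integral>x. \<bar>real_cond_exp M Ginf (f b) x - real_cond_exp M (G k) (f b) x\<bar> \<partial>M)"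
    unfolding Osc_def using assms by (intro sum_mono measure_cond_exp_oscillation_le)
  finally show ?thesis unfolding Osc_Union .
qed

lemma cond_exp_distance_dominated:
  fixes f :: "'b::finite \<Rightarrow> 'a \<Rightarrow> real" and k :: nat
  assumes f: "\<And>b. integrable M (f b)" "\<And>b x. 0 \<le> f b x \<and> f b x \<le> 1" and "0 < \<epsilon>"
  defines "e \<equiv> (\<Sum>b\<in>UNIV. \<integral>x. \<bar>real_cond_exp M Ginf (f b) x - real_cond_exp M (G k) (f b) x\<bar> \<partial>M)"
  shows "\<exists>Z. Z \<in> borel_measurable M \<and> (\<forall>x. 0 \<le> Z x \<and> Z x \<le> 1) \<and> (\<integral>x. Z x \<partial>M) \<le> \<epsilon> + e / \<epsilon> + e
    \<and> (AE x in M. \<forall>n\<ge>k. dist_max (\<lambda>b. real_cond_exp M (G n) (f b) x) (\<lambda>b. real_cond_exp M Ginf (f b) x) \<le> Z x)"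
proof -
  define r where "r n b = real_cond_exp M (G n) (f b)" for n b
  define ri where "ri b = real_cond_exp M Ginf (f b)" for b
  have [measurable]: "r n b \<in> borel_measurable M" "ri b \<in> borel_measurable M" for n b
    unfolding r_def ri_def by (auto intro: borel_measurable_cond_exp2)
  have "integrable M (r n b)" "integrable M (ri b)" for n b
    unfolding r_def ri_def using f(1) subalgebra_G subalgebra_Ginf
    by (auto intro: sigma_finite_subalgebra.real_cond_exp_int(1))
  then have int_diff: "integrable M (\<lambda>x. \<bar>ri b x - r k b x\<bar>)" for b by auto
  define Osc where "Osc = {x\<in>space M. \<exists>n\<ge>k. \<exists>b. \<epsilon> < \<bar>r n b x - r k b x\<bar>}"
  have [measurable]: "Osc \<in> sets M" unfolding Osc_def by measurable
  have "\<epsilon> * measure M Osc \<le> e"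
    unfolding Osc_def e_def r_def ri_def using f(1) \<open>0 < \<epsilon>\<close>
    by (intro measure_cond_exp_oscillation_family_le) auto
  \<comment> \<open>Off \<open>Osc\<close> the triangle inequality through \<open>r k\<close> gives the bound; on \<open>Osc\<close> the trivial bound 1.\<close>
  define Z where "Z x = min 1 (\<epsilon> + indicator Osc x + (\<Sum>b\<in>UNIV. \<bar>ri b x - r k b x\<bar>))" for x
  have Z_meas: "Z \<in> borel_measurable M" unfolding Z_def by measurable
  moreover have Z_bounds: "0 \<le> Z x \<and> Z x \<le> 1" for x
    using \<open>0 < \<epsilon>\<close> by (auto simp: Z_def intro!: add_nonneg_nonneg sum_nonneg)
  moreover have "(\<integral>x. Z x \<partial>M) \<le> \<epsilon> + e / \<epsilon> + e"
  proof -
    have "integrable M Z" using Z_meas Z_bounds by (intro integrable_const_bound[where B=1]) auto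
    then have "(\<integral>x. Z x \<partial>M) \<le> (\<integral>x. \<epsilon> + indicator Osc x + (\<Sum>b\<in>UNIV. \<bar>ri b x - r k b x\<bar>) \<partial>M)"
      using int_diff by (intro integral_mono) (auto simp: Z_def less_top[symmetric])
    also have "\<dots> = \<epsilon> + measure M Osc + e"
      using int_diff by (simp add: e_def r_def ri_def less_top[symmetric] prob_space integral_sum[symmetric])
    also have "\<dots> \<le> \<epsilon> + e / \<epsilon> + e"
      using \<open>\<epsilon> * measure M Osc \<le> e\<close> \<open>0 < \<epsilon>\<close> by (simp add: field_simps)
    finally show ?thesis .
  qed
  moreover have "AE x in M. \<forall>n\<ge>k. dist_max (\<lambda>b. r n b x) (\<lambda>b. ri b x) \<le> Z x"
    using AE_cond_exp_unit_interval[of f, OF f] AE_space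
  proof eventually_elim
    case (elim x)
    show ?case
    proof (intro allI impI)
      fix n assume "k \<le> n"
      show "dist_max (\<lambda>b. r n b x) (\<lambda>b. ri b x) \<le> Z x"
        unfolding Z_def
      proof (rule dist_max_le_min_bound)
        show "dist_max (\<lambda>b. r n b x) (\<lambda>b. ri b x) \<le> 1"
          using elim by (intro dist_max_le_1) (auto simp: r_def ri_def)
        show "dist_max (\<lambda>b. r n b x) (\<lambda>b. r k b x) \<le> \<epsilon>" if "x \<notin> Osc"
          using that \<open>k \<le> n\<close> elim unfolding dist_max_le_iff Osc_def by (auto simp: not_less)
      qed (use \<open>0 < \<epsilon>\<close> in simp)
    qed
  qed
  ultimately show ?thesis unfolding r_def ri_def by blast
qed

lemma cond_exp_distance_eventually_dominated:
  fixes f :: "'b::finite \<Rightarrow> 'a \<Rightarrow> real"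
  assumes f: "\<And>b. integrable M (f b)" "\<And>b x. 0 \<le> f b x \<and> f b x \<le> 1" and "0 < \<delta>"
  shows "\<exists>k Z. Z \<in> borel_measurable M \<and> (\<forall>x. 0 \<le> Z x \<and> Z x \<le> 1) \<and> (\<integral>x. Z x \<partial>M) \<le> \<delta>
    \<and> (AE x in M. \<forall>n\<ge>k. dist_max (\<lambda>b. real_cond_exp M (G n) (f b) x) (\<lambda>b. real_cond_exp M Ginf (f b) x) \<le> Z x)"
proof -
  define e where "e k = (\<Sum>b\<in>UNIV. \<integral>x. \<bar>real_cond_exp M Ginf (f b) x - real_cond_exp M (G k) (f b) x\<bar> \<partial>M)" for k
  have "e \<longlonglongrightarrow> (\<Sum>b\<in>(UNIV :: 'b set). 0)"
    unfolding e_def using f(1) by (intro tendsto_sum tendsto_L1_cond_exp)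
  then have "e \<longlonglongrightarrow> 0" by simp
  define \<epsilon> where "\<epsilon> = \<delta> / 2"
  have "0 < \<epsilon>" using \<open>0 < \<delta>\<close> by (simp add: \<epsilon>_def)
  have "0 < \<delta> / 2 / (1 / \<epsilon> + 1)" using \<open>0 < \<delta>\<close> \<open>0 < \<epsilon>\<close> by (intro divide_pos_pos add_pos_pos) auto
  then obtain k where e_k: "e k < \<delta> / 2 / (1 / \<epsilon> + 1)"
    using eventually_happens'[OF _ order_tendstoD(2)[OF \<open>e \<longlonglongrightarrow> 0\<close>]] by auto
  then have "\<epsilon> + e k / \<epsilon> + e k \<le> \<delta>"
    using \<open>0 < \<epsilon>\<close> by (simp add: \<epsilon>_def field_simps)
  then show ?thesis
    using cond_exp_distance_dominated[where f=f and k=k, OF f \<open>0 < \<epsilon>\<close>] unfolding e_def by (meson order_trans)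
qed

lemma cesaro_cond_exp_distance_AE:
  fixes f :: "'b::finite \<Rightarrow> 'a \<Rightarrow> real"
  assumes "mpt M T" and f: "\<And>b. integrable M (f b)" "\<And>b x. 0 \<le> f b x \<and> f b x \<le> 1"
  shows "AE x in M. (\<lambda>N. (\<Sum>n<N. dist_max (\<lambda>b. real_cond_exp M (G n) (f b) ((T ^^ n) x))
                                      (\<lambda>b. real_cond_exp M Ginf (f b) ((T ^^ n) x))) / real N) \<longlonglongrightarrow> 0"
proof -
  interpret mpt M T by (rule \<open>mpt M T\<close>)
  show ?thesis
  proof (rule cesaro_average_tendsto_zero_AE[where C=1])
    show "AE x in M. \<forall>n. 0 \<le> dist_max (\<lambda>b. real_cond_exp M (G n) (f b) x) (\<lambda>b. real_cond_exp M Ginf (f b) x)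
        \<and> dist_max (\<lambda>b. real_cond_exp M (G n) (f b) x) (\<lambda>b. real_cond_exp M Ginf (f b) x) \<le> 1"
      using AE_cond_exp_unit_interval[of f, OF f] by eventually_elim (auto intro: dist_max_nonneg dist_max_le_1)
  qed (rule cond_exp_distance_eventually_dominated[OF f])
qed

end

section \<open>The sequence space\<close>

lemma space_seq_space [simp]: "space seq_space = UNIV"
  unfolding seq_space_def by (simp add: space_PiM)

lemma measurable_shift: "shift \<in> measurable seq_space seq_space"
  unfolding seq_space_def shift_def
  by (rule measurable_PiM_single') (auto intro!: measurable_component_singleton)

lemma measurable_coordinate: "(\<lambda>\<omega>. \<omega> j) \<in> measurable seq_space (count_space UNIV)"
  unfolding seq_space_def by (rule measurable_component_singleton) simp

lemma funpow_shift: "(shift ^^ n) \<omega> = (\<lambda>m. \<omega> (m + int n))"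
  by (induction n arbitrary: \<omega>) (auto simp: shift_def funpow_swap1 algebra_simps)

lemma bij_shift: "bij (shift :: (int \<Rightarrow> 'a) \<Rightarrow> _)"
proof (rule bijI)
  show "inj (shift :: (int \<Rightarrow> 'a) \<Rightarrow> _)"
  proof (rule injI)
    fix \<omega> \<omega>' :: "int \<Rightarrow> 'a" assume eq: "shift \<omega> = shift \<omega>'"
    have "\<omega> m = \<omega>' m" for m using fun_cong[OF eq, of "m - 1"] by (simp add: shift_def)
    then show "\<omega> = \<omega>'" by auto
  qed
  have "shift (\<lambda>m. \<omega> (m - 1)) = \<omega>" for \<omega> :: "int \<Rightarrow> 'a" unfolding shift_def by simp
  then show "surj (shift :: (int \<Rightarrow> 'a) \<Rightarrow> _)" by (metis surjI)
qed

definition coord_generators :: "int set \<Rightarrow> (int \<Rightarrow> 'a) set set" where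
  "coord_generators J = {(\<lambda>\<omega>. \<omega> j) -` B | j B. j \<in> J}"

lemma coord_sets_eq: "coord_sets J = sigma_sets UNIV (coord_generators J)"
  unfolding coord_sets_def coord_generators_def ..

lemma coord_sets_subset: "coord_sets J \<subseteq> sets (seq_space :: (int \<Rightarrow> 'a) measure)"
proof -
  have "coord_generators J \<subseteq> sets (seq_space :: (int \<Rightarrow> 'a) measure)"
  proof
    fix A :: "(int \<Rightarrow> 'a) set" assume "A \<in> coord_generators J"
    then obtain j B where "A = (\<lambda>\<omega>. \<omega> j) -` B" unfolding coord_generators_def by blast
    then show "A \<in> sets seq_space" using measurable_sets[OF measurable_coordinate, of B j] by simp
  qed
  then show ?thesis unfolding coord_sets_eq using sets.sigma_sets_subset[of _ seq_space] by simp
qed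

lemma sets_join_alg: "sets (join_alg J D) = sigma_sets UNIV (coord_sets J \<union> D)"
  unfolding join_alg_def by (rule sets_measure_of) simp

lemma space_join_alg [simp]: "space (join_alg J D) = UNIV"
  unfolding join_alg_def by (simp add: space_measure_of_conv)

lemma sets_join_alg_subset:
  assumes "D \<subseteq> sets seq_space"
  shows "sets (join_alg J D) \<subseteq> sets seq_space"
  unfolding sets_join_alg using coord_sets_subset assms
  by (intro sets.sigma_sets_subset[of _ seq_space, simplified]) auto

lemma sets_join_alg_mono:
  assumes "J \<subseteq> J'"
  shows "sets (join_alg J D) \<subseteq> sets (join_alg J' D)"
proof -
  have "coord_sets J \<subseteq> coord_sets J'"
    unfolding coord_sets_eq coord_generators_def using assms by (intro sigma_sets_subseteq) blast
  then show ?thesis unfolding sets_join_alg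
    by (intro sigma_sets_mono) auto
qed

lemma sets_join_alg_lessThan_0:
  "sets (join_alg {..<0} D) = sigma_sets UNIV (\<Union>k. sets (join_alg {- int k..<0} D))"
proof
  have "sets (join_alg {- int k..<0} D) \<subseteq> sets (join_alg {..<0} D)" for k
    by (rule sets_join_alg_mono) auto
  then have "(\<Union>k. sets (join_alg {- int k..<0} D)) \<subseteq> sets (join_alg {..<0} D)" by blast
  from sets.sigma_sets_subset[OF this]
  show "sigma_sets UNIV (\<Union>k. sets (join_alg {- int k..<0} D)) \<subseteq> sets (join_alg {..<0} D)" by simp
next
  let ?U = "\<Union>k. sets (join_alg {- int k..<0} D)"
  have "coord_generators {..<0} \<subseteq> ?U"
  proof
    fix A :: "(int \<Rightarrow> 'a) set" assume "A \<in> coord_generators {..<0}"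
    then obtain j B where "j < 0" "A = (\<lambda>\<omega>. \<omega> j) -` B" unfolding coord_generators_def by auto
    then have "A \<in> coord_generators {- int (nat (- j))..<0}" unfolding coord_generators_def by auto
    then have "A \<in> sets (join_alg {- int (nat (- j))..<0} D)"
      unfolding sets_join_alg coord_sets_eq by auto
    then show "A \<in> ?U" by blast
  qed
  then have "coord_sets {..<0} \<subseteq> sigma_sets UNIV ?U"
    unfolding coord_sets_eq by (rule sigma_sets_subseteq)
  moreover have "D \<subseteq> sigma_sets UNIV ?U"
  proof
    fix A assume "A \<in> D"
    then have "A \<in> sets (join_alg {- int 0..<0} D)" unfolding sets_join_alg by auto
    then have "A \<in> ?U" by (rule UN_I[OF UNIV_I])
    then show "A \<in> sigma_sets UNIV ?U" by (rule sigma_sets.Basic)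
  qed
  ultimately show "sets (join_alg {..<0} D) \<subseteq> sigma_sets UNIV ?U"
    unfolding sets_join_alg by (intro sigma_sets_mono) auto
qed

lemma sigma_finite_subalgebra_join_alg:
  assumes "prob_space \<mu>" "sets \<mu> = sets seq_space" "D \<subseteq> sets seq_space"
  shows "sigma_finite_subalgebra \<mu> (join_alg J D)"
proof -
  interpret prob_space \<mu> by (rule assms(1))
  have "subalgebra \<mu> (join_alg J D)"
    using sets_join_alg_subset[OF assms(3)] assms(2) sets_eq_imp_space_eq[OF assms(2)]
    by (simp add: subalgebra_def)
  then show ?thesis
    by (intro finite_measure_subalgebra_is_sigma_finite finite_measure_subalgebra.intro
      finite_measure_subalgebra_axioms.intro) (auto intro: finite_measure_axioms)
qed

lemma prob_filtration_join_alg: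
  assumes "prob_space \<mu>" "sets \<mu> = sets seq_space" "D \<subseteq> sets seq_space"
  shows "prob_filtration \<mu> (\<lambda>k. join_alg {- int k..<0} D) (join_alg {..<0} D)"
proof (intro prob_filtration.intro prob_filtration_axioms.intro assms(1))
  show "sets (join_alg {- int j..<0} D) \<subseteq> sets (join_alg {- int k..<0} D)" if "j \<le> k" for j k
    using that by (intro sets_join_alg_mono) auto
  show "sets (join_alg {..<0} D) = sigma_sets (space \<mu>) (\<Union>k. sets (join_alg {- int k..<0} D))"
    using sets_eq_imp_space_eq[OF assms(2)] sets_join_alg_lessThan_0 by simp
qed (use sigma_finite_subalgebra_join_alg[OF assms] in auto)

lemma mpt_shift:
  assumes "prob_space \<mu>" "sets \<mu> = sets seq_space" "distr \<mu> seq_space shift = \<mu>"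
  shows "mpt \<mu> shift"
proof (intro mpt.intro mpt_axioms.intro assms(1))
  show "shift \<in> measurable \<mu> \<mu>"
    using measurable_shift measurable_cong_sets[OF assms(2) assms(2)] by simp
  show "distr \<mu> \<mu> shift = \<mu>"
    using distr_cong[of \<mu> \<mu> \<mu> seq_space shift shift] assms(2,3) by simp
qed

lemma vimage_shift_image_eq:
  assumes D: "D \<subseteq> sets seq_space" and invariant: "\<forall>S \<in> sets seq_space. S \<in> D \<longleftrightarrow> shift ` S \<in> D"
  shows "(\<lambda>A. shift -` A) ` D = D"
proof (intro equalityI subsetI)
  fix X assume "X \<in> (\<lambda>A. shift -` A) ` D"
  then obtain A where A: "A \<in> D" "X = shift -` A" by auto
  have "shift -` A \<in> sets seq_space"
    using measurable_sets[OF measurable_shift, of A] A(1) D by auto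
  moreover have "shift ` (shift -` A) = A" by (rule surj_image_vimage_eq[OF bij_is_surj[OF bij_shift]])
  ultimately show "X \<in> D" using invariant A by auto
next
  fix A assume "A \<in> D"
  then have "shift ` A \<in> D" using invariant D by auto
  moreover have "shift -` (shift ` A) = A" by (rule inj_vimage_image_eq[OF bij_is_inj[OF bij_shift]])
  ultimately show "A \<in> (\<lambda>A. shift -` A) ` D" by (metis image_eqI)
qed

lemma vimage_funpow_shift_image_eq:
  assumes "D \<subseteq> sets seq_space" and "\<forall>S \<in> sets seq_space. S \<in> D \<longleftrightarrow> shift ` S \<in> D"
  shows "(\<lambda>A. (shift ^^ n) -` A) ` D = D"
proof (induction n)
  case (Suc n)
  have "(shift ^^ Suc n) -` A = (shift ^^ n) -` (shift -` A)" for A :: "(int \<Rightarrow> 'a) set"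
    by (simp only: funpow.simps vimage_comp)
  then have "(\<lambda>A. (shift ^^ Suc n) -` A) ` D = (\<lambda>A. (shift ^^ n) -` A) ` ((\<lambda>A. shift -` A) ` D)"
    by (simp add: image_image)
  also have "\<dots> = D" unfolding vimage_shift_image_eq[OF assms] Suc ..
  finally show ?case .
qed simp

lemma vimage_funpow_shift_coord_generators:
  "(\<lambda>A. (shift ^^ n) -` A \<inter> UNIV) ` (coord_generators J :: (int \<Rightarrow> 'a) set set)
    = coord_generators ((\<lambda>j. j + int n) ` J)"
proof -
  have vimage_coordinate: "(shift ^^ n) -` ((\<lambda>\<omega>. \<omega> j) -` B) = (\<lambda>\<omega>. \<omega> (j + int n)) -` B"
    for j and B :: "'a set"
    by (auto simp: funpow_shift)
  show ?thesis unfolding coord_generators_def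
  proof (intro equalityI subsetI)
    fix X :: "(int \<Rightarrow> 'a) set" assume "X \<in> (\<lambda>A. (shift ^^ n) -` A \<inter> UNIV) ` {(\<lambda>\<omega>. \<omega> j) -` B | j B. j \<in> J}"
    then obtain j B where "j \<in> J" "X = (\<lambda>\<omega>. \<omega> (j + int n)) -` B" using vimage_coordinate by auto
    then show "X \<in> {(\<lambda>\<omega>. \<omega> j) -` B | j B. j \<in> (\<lambda>j. j + int n) ` J}" by blast
  next
    fix X :: "(int \<Rightarrow> 'a) set" assume "X \<in> {(\<lambda>\<omega>. \<omega> j) -` B | j B. j \<in> (\<lambda>j. j + int n) ` J}"
    then obtain j B where "j \<in> J" "X = (shift ^^ n) -` ((\<lambda>\<omega>. \<omega> j) -` B) \<inter> UNIV"
      using vimage_coordinate by auto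
    then show "X \<in> (\<lambda>A. (shift ^^ n) -` A \<inter> UNIV) ` {(\<lambda>\<omega>. \<omega> j) -` B | j B. j \<in> J}" by blast
  qed
qed

lemma sets_join_alg_shift:
  fixes D :: "(int \<Rightarrow> 'a) set set"
  assumes "D \<subseteq> sets seq_space" and "\<forall>S \<in> sets seq_space. S \<in> D \<longleftrightarrow> shift ` S \<in> D"
  shows "{(shift ^^ n) -` A \<inter> UNIV | A. A \<in> sets (join_alg J D)} = sets (join_alg ((\<lambda>j. j + int n) ` J) D)"
proof -
  have "(shift ^^ n :: (int \<Rightarrow> 'a) \<Rightarrow> _) \<in> UNIV \<rightarrow> UNIV" by simp
  note vimage_sigma_sets = sigma_sets_vimage_commute[OF this]
  have "(\<lambda>A. (shift ^^ n) -` A \<inter> UNIV) ` (coord_sets J \<union> D) = coord_sets ((\<lambda>j. j + int n) ` J) \<union> D"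
    using vimage_sigma_sets[of "coord_generators J"] vimage_funpow_shift_image_eq[OF assms, of n]
    unfolding image_Un coord_sets_eq Setcompr_eq_image vimage_funpow_shift_coord_generators by simp
  then show ?thesis
    using vimage_sigma_sets[of "coord_sets J \<union> D"] unfolding sets_join_alg Setcompr_eq_image by simp
qed

lemma integrable_indicator_coordinate:
  assumes "prob_space \<mu>" "sets \<mu> = sets seq_space"
  shows "integrable \<mu> (indicator {\<omega>. \<omega> j = a} :: (int \<Rightarrow> 'a) \<Rightarrow> real)"
proof -
  interpret prob_space \<mu> by (rule assms(1))
  have "{\<omega>. \<omega> j = a} \<in> sets \<mu>"
    using measurable_sets[OF measurable_coordinate, of "{a}" j] assms(2) by (simp add: vimage_def)
  then show ?thesis by (simp add: less_top[symmetric])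
qed

lemma cond_dist_eq_cond_exp_shift:
  fixes \<mu> :: "(int \<Rightarrow> 'a) measure"
  assumes "mpt \<mu> shift" "sets \<mu> = sets seq_space"
    and "D \<subseteq> sets seq_space" and "\<forall>S \<in> sets seq_space. S \<in> D \<longleftrightarrow> shift ` S \<in> D"
  shows "AE \<omega> in \<mu>. cond_dist \<mu> (join_alg ((\<lambda>j. j + int n) ` J) D) (int n) \<omega> a
    = real_cond_exp \<mu> (join_alg J D) (indicator {\<omega>. \<omega> 0 = a}) ((shift ^^ n) \<omega>)"
proof -
  interpret mpt \<mu> shift by (rule assms(1))
  define f where "f = (indicator {\<omega>. \<omega> 0 = a} :: (int \<Rightarrow> 'a) \<Rightarrow> real)"
  have "integrable \<mu> f" unfolding f_def by (rule integrable_indicator_coordinate[OF prob_space_axioms assms(2)])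
  moreover have "sets (join_alg ((\<lambda>j. j + int n) ` J) D) = {(shift ^^ n) -` A \<inter> space \<mu> | A. A \<in> sets (join_alg J D)}"
    using sets_join_alg_shift[OF assms(3,4)] sets_eq_imp_space_eq[OF assms(2)] by simp
  ultimately have "AE \<omega> in \<mu>. real_cond_exp \<mu> (join_alg ((\<lambda>j. j + int n) ` J) D) (\<lambda>\<omega>. f ((shift ^^ n) \<omega>)) \<omega>
      = real_cond_exp \<mu> (join_alg J D) f ((shift ^^ n) \<omega>)"
    using sigma_finite_subalgebra_join_alg[OF prob_space_axioms assms(2,3)] by (intro cond_exp_funpow)
  moreover have "(\<lambda>\<omega>. f ((shift ^^ n) \<omega>)) = indicator {\<omega>. \<omega> (int n) = a}"
    by (auto simp: f_def funpow_shift indicator_def fun_eq_iff)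
  ultimately show ?thesis unfolding cond_dist_def f_def by simp
qed

lemma translate_lessThan_0: "(\<lambda>j. j + int n) ` {..<0} = {..<int n}"
proof (intro equalityI subsetI)
  fix j assume "j \<in> {..<int n}"
  then show "j \<in> (\<lambda>j. j + int n) ` {..<0}" by (intro image_eqI[of _ _ "j - int n"]) auto
qed auto

lemma AE_cond_dist_eq_shifted_cond_exp:
  fixes \<mu> :: "(int \<Rightarrow> 'a::finite) measure"
  assumes "mpt \<mu> shift" "sets \<mu> = sets seq_space"
    and "D \<subseteq> sets seq_space" and "\<forall>S \<in> sets seq_space. S \<in> D \<longleftrightarrow> shift ` S \<in> D"
  shows "AE \<omega> in \<mu>. \<forall>n.
      cond_dist \<mu> (join_alg {0..<int n} D) (int n) \<omega>
        = (\<lambda>a. real_cond_exp \<mu> (join_alg {- int n..<0} D) (indicator {\<omega>. \<omega> 0 = a}) ((shift ^^ n) \<omega>))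
    \<and> cond_dist \<mu> (join_alg {..<int n} D) (int n) \<omega>
        = (\<lambda>a. real_cond_exp \<mu> (join_alg {..<0} D) (indicator {\<omega>. \<omega> 0 = a}) ((shift ^^ n) \<omega>))"
proof -
  have "AE \<omega> in \<mu>. \<forall>a.
      cond_dist \<mu> (join_alg {0..<int n} D) (int n) \<omega> a
        = real_cond_exp \<mu> (join_alg {- int n..<0} D) (indicator {\<omega>. \<omega> 0 = a}) ((shift ^^ n) \<omega>)
    \<and> cond_dist \<mu> (join_alg {..<int n} D) (int n) \<omega> a
        = real_cond_exp \<mu> (join_alg {..<0} D) (indicator {\<omega>. \<omega> 0 = a}) ((shift ^^ n) \<omega>)" for n
    using cond_dist_eq_cond_exp_shift[OF assms, of n "{- int n..<0}"]
      cond_dist_eq_cond_exp_shift[OF assms, of n "{..<0}"]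
    by (simp add: AE_all_countable translate_lessThan_0)
  then show ?thesis by (simp add: AE_all_countable fun_eq_iff)
qed

theorem lemma1:
  fixes \<mu> :: "(int \<Rightarrow> 'a::finite) measure"
    and D :: "(int \<Rightarrow> 'a) set set"
  assumes "prob_space \<mu>"
    and "sets \<mu> = sets seq_space"
    and "distr \<mu> seq_space shift = \<mu>"
    and "sigma_algebra UNIV D"
    and "D \<subseteq> sets seq_space"
    and "\<forall>S \<in> sets seq_space. S \<in> D \<longleftrightarrow> shift ` S \<in> D"
  shows "AE \<omega> in \<mu>.
    (\<lambda>N. (\<Sum>n<N. dist_max (cond_dist \<mu> (join_alg {0..<int n} D) (int n) \<omega>)
                             (cond_dist \<mu> (join_alg {..<int n} D) (int n) \<omega>)) / real N)
      \<longlonglongrightarrow> 0"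
proof -
  interpret prob_filtration \<mu> "\<lambda>k. join_alg {- int k..<0} D" "join_alg {..<0} D"
    by (rule prob_filtration_join_alg[OF assms(1,2,5)])
  have shift: "mpt \<mu> shift" by (rule mpt_shift[OF assms(1-3)])
  have "AE \<omega> in \<mu>. (\<lambda>N. (\<Sum>n<N.
      dist_max (\<lambda>a. real_cond_exp \<mu> (join_alg {- int n..<0} D) (indicator {\<omega>. \<omega> 0 = a}) ((shift ^^ n) \<omega>))
        (\<lambda>a. real_cond_exp \<mu> (join_alg {..<0} D) (indicator {\<omega>. \<omega> 0 = a}) ((shift ^^ n) \<omega>))) / real N)
      \<longlonglongrightarrow> 0"
    using integrable_indicator_coordinate[OF assms(1,2)]
    by (intro cesaro_cond_exp_distance_AE[OF shift, where f="\<lambda>a. indicator {\<omega>. \<omega> 0 = a}"]) auto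
  with AE_cond_dist_eq_shifted_cond_exp[OF shift assms(2,5,6)] show ?thesis
    by eventually_elim simp
qed

end
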